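(* Let $(\Omega,\mathcal{F},\mathbb{P})$ be a nonatomic probability space and $(\Phi,\Psi)$ an Orlicz pair as in the context. For every $X\in L^\Phi$ and every $Y\in L^\Psi$ with $Y\ge0$, the net $\big(\mathbb{E}\big[\,|\mathbb{E}[X|\pi]-X|\,Y\big]\big)_{\pi\in\Pi}$ converges to $0$.
   Context: $(\Omega,\mathcal{F},\mathbb{P})$ is a nonatomic probability space. An Orlicz function is a convex, increasing $\Phi:[0,\infty)\to[0,\infty)$ with $\Phi(0)=0$; its conjugate is $\Psi(s)=\sup_{t\ge0}(ts-\Phi(t))$. Standing assumption: $\Phi(t)>0$ for $t>0$ and $\lim_{t\to\infty}\Phi(t)/t=\infty$. $L^\Phi$ is the space of random variables $X$ (mod a.s. equality) with $\|X\|_\Phi:=\inf\{\lambda>0:\mathbb{E}[\Phi(|X|/\lambda)]\le 1\}<\infty$; $L^\Psi$ analogously. $\Pi$ denotes the set of all finite measurable partitions $\pi$ of $\Omega$ whose members all have nonzero probability, directed by refinement ($\pi'\ge\pi$ iff $\pi'$ refines $\pi$); $\mathbb{E}[X|\pi]:=\mathbb{E}[X|\sigma(\pi)]$, where $\sigma(\pi)$ is the $\sigma$-algebra generated by $\pi$. *)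

theory Defs
  imports "HOL-Probability.Probability"
begin

definition nonatomic :: "'a measure \<Rightarrow> bool" where
  "nonatomic M \<longleftrightarrow> (\<forall>A\<in>sets M. 0 < measure M A \<longrightarrow>
      (\<exists>B\<in>sets M. B \<subseteq> A \<and> 0 < measure M B \<and> measure M B < measure M A))"

definition orlicz_function :: "(real \<Rightarrow> real) \<Rightarrow> bool" where
  "orlicz_function \<Phi> \<longleftrightarrow>
     convex_on {0..} \<Phi> \<and> mono_on {0..} \<Phi> \<and> \<Phi> 0 = 0 \<and>
     (\<forall>t>0. \<Phi> t > 0) \<and> filterlim (\<lambda>t. \<Phi> t / t) at_top at_top"

definition orlicz_conj :: "(real \<Rightarrow> real) \<Rightarrow> real \<Rightarrow> real" where
  "orlicz_conj \<Phi> s = (SUP t\<in>{0..}. t * s - \<Phi> t)"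

text \<open>Orlicz space: measurable X with finite Luxemburg norm, i.e. some lambda > 0
  with E[Phi(|X|/lambda)] <= 1.\<close>
definition orlicz_space :: "'a measure \<Rightarrow> (real \<Rightarrow> real) \<Rightarrow> ('a \<Rightarrow> real) set" where
  "orlicz_space M \<Phi> = {X \<in> borel_measurable M.
      \<exists>c>0. (\<integral>\<^sup>+ \<omega>. ennreal (\<Phi> (\<bar>X \<omega>\<bar> / c)) \<partial>M) \<le> 1}"

definition fin_partitions :: "'a measure \<Rightarrow> 'a set set set" where
  "fin_partitions M = {\<pi>. finite \<pi> \<and> \<pi> \<subseteq> sets M \<and> disjoint \<pi> \<and> \<Union>\<pi> = space M \<and>
      (\<forall>A\<in>\<pi>. 0 < measure M A)}"

definition refines :: "'a set set \<Rightarrow> 'a set set \<Rightarrow> bool" where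
  "refines \<pi>' \<pi> \<longleftrightarrow> (\<forall>B\<in>\<pi>'. \<exists>A\<in>\<pi>. B \<subseteq> A)"

definition cond_exp_part :: "'a measure \<Rightarrow> 'a set set \<Rightarrow> ('a \<Rightarrow> real) \<Rightarrow> 'a \<Rightarrow> real" where
  "cond_exp_part M \<pi> X = real_cond_exp M (sigma (space M) \<pi>) X"

end

theory Submission
  imports Defs
begin

text \<open>
  Truncate \<open>X\<close> at a level \<open>n\<close> and round it down to a grid \<open>\<delta>\<int>\<close>; the result \<open>S\<close> takes finitely many
  values, so it is (a.e.) constant on the blocks of some \<open>\<pi>\<^sub>0\<in>\<Pi>\<close>, and for \<open>\<pi>\<close> refining \<open>\<pi>\<^sub>0\<close>
  we get \<open>E[X|\<pi>] - X = E[X - S|\<pi>] - (X - S)\<close> with \<open>\<bar>X - S\<bar> \<le> \<delta> + R\<close>, \<open>R\<close> the tail of \<open>\<bar>X\<bar>\<close> above \<open>n\<close>.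
  The only term that is not obviously small is \<open>E[R|\<pi>] Y\<close>. Split \<open>Y\<close> at a level \<open>m\<close>: below \<open>m\<close> it
  is at most \<open>m E[R|\<pi>]\<close>, whose integral is \<open>m E R\<close>; above \<open>m\<close> Young's inequality and the conditional
  Jensen inequality bound it by \<open>c d (E[\<Phi>(R/c)|\<pi>] + \<Psi>(Y/d))\<close>. Everything is then controlled by
  \<open>\<delta> E Y\<close> and by tails of the integrable functions \<open>\<Phi>(\<bar>X\<bar>/c)\<close>, \<open>\<bar>X\<bar>(\<bar>Y\<bar> + m)\<close> and \<open>\<Psi>(\<bar>Y\<bar>/d)\<close>,
  uniformly in \<open>\<pi>\<close>; choosing \<open>m\<close>, then \<open>n\<close>, then \<open>\<delta>\<close> makes it small.
\<close>

lemma orlicz_function_nonneg: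
  assumes "orlicz_function \<Phi>" "0 \<le> t"
  shows "0 \<le> \<Phi> t"
  using assms unfolding orlicz_function_def mono_on_def by (metis atLeast_iff order_refl)

lemma orlicz_conj_bdd_above:
  assumes "orlicz_function \<Phi>"
  shows "bdd_above ((\<lambda>t. t * s - \<Phi> t) ` {0..})"
proof -
  have "\<forall>\<^sub>F t in at_top. \<bar>s\<bar> \<le> \<Phi> t / t"
    using assms unfolding orlicz_function_def filterlim_at_top by blast
  then obtain T where T: "\<And>t. t \<ge> T \<Longrightarrow> \<bar>s\<bar> \<le> \<Phi> t / t"
    by (auto simp: eventually_at_top_linorder)
  have "t * s - \<Phi> t \<le> max T 1 * \<bar>s\<bar>" if "t \<ge> 0" for t
  proof (cases "t \<ge> max T 1")
    case True
    then have "t * \<bar>s\<bar> \<le> \<Phi> t"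
      using T[of t] by (simp add: pos_le_divide_eq mult.commute)
    moreover have "t * s \<le> t * \<bar>s\<bar>" "0 \<le> max T 1 * \<bar>s\<bar>"
      using that by (auto intro: mult_left_mono)
    ultimately show ?thesis by linarith
  next
    case False
    have "t * s \<le> t * \<bar>s\<bar>" using that by (simp add: mult_left_mono)
    also have "\<dots> \<le> max T 1 * \<bar>s\<bar>" using False by (intro mult_right_mono) auto
    finally show ?thesis using orlicz_function_nonneg[OF assms that] by simp
  qed
  then show ?thesis by (auto simp: bdd_above_def)
qed

lemma fenchel_young:
  assumes "orlicz_function \<Phi>" "0 \<le> a"
  shows "a * b \<le> \<Phi> a + orlicz_conj \<Phi> b"
proof -
  have "a * b - \<Phi> a \<le> orlicz_conj \<Phi> b"
    unfolding orlicz_conj_def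
    by (rule cSUP_upper[OF _ orlicz_conj_bdd_above[OF assms(1)]]) (use assms in auto)
  then show ?thesis by simp
qed

lemma orlicz_conj_nonneg:
  assumes "orlicz_function \<Phi>"
  shows "0 \<le> orlicz_conj \<Phi> s"
  using fenchel_young[OF assms, of 0 s] assms unfolding orlicz_function_def by simp

lemma orlicz_conj_mono:
  assumes "orlicz_function \<Phi>"
  shows "mono_on {0..} (orlicz_conj \<Phi>)"
proof (rule mono_onI)
  fix r s :: real assume "r \<le> s"
  show "orlicz_conj \<Phi> r \<le> orlicz_conj \<Phi> s"
    unfolding orlicz_conj_def
  proof (rule cSUP_mono[OF _ orlicz_conj_bdd_above[OF assms]])
    fix t :: real assume "t \<in> {0..}"
    then show "\<exists>t'\<in>{0..}. t * r - \<Phi> t \<le> t' * s - \<Phi> t'"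
      using \<open>r \<le> s\<close> by (intro bexI[of _ t]) (auto intro: mult_left_mono)
  qed simp
qed

lemma fenchel_young_split:
  assumes "orlicz_function \<Phi>" "0 \<le> a" "0 \<le> y" "0 \<le> m" "0 < c" "0 < d"
  shows "a * y \<le> m * a + c * d * (\<Phi> (a / c) + (if m < y then orlicz_conj \<Phi> (y / d) else 0))"
proof (cases "m < y")
  case True
  have "a * y = c * d * ((a / c) * (y / d))" using assms by simp
  also have "\<dots> \<le> c * d * (\<Phi> (a / c) + orlicz_conj \<Phi> (y / d))"
    using assms by (intro mult_left_mono fenchel_young) auto
  moreover have "0 \<le> m * a" using assms by simp
  ultimately show ?thesis using True by simp
next
  case False
  then have "a * y \<le> m * a" using assms by (simp add: mult_left_mono mult.commute)
  moreover have "0 \<le> c * d * \<Phi> (a / c)"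
    using assms by (simp add: orlicz_function_nonneg)
  ultimately show ?thesis using False by simp
qed

lemma mono_comp_max_zero:
  assumes "mono_on {0..} G"
  shows "mono (\<lambda>t::real. G (max 0 t))"
  using assms unfolding mono_on_def mono_def by (auto intro!: max.mono)

text \<open>Extending \<open>G\<close> by \<open>G 0\<close> to the negative axis makes the conditional Jensen inequality of the
  library, which wants a convex function on an open interval, applicable.\<close>
lemma convex_on_comp_max_zero:
  assumes "convex_on {0..} G" "mono_on {0..} G"
  shows "convex_on UNIV (\<lambda>t::real. G (max 0 t))"
proof (rule convex_onI)
  fix t x y :: real assume t: "0 < t" "t < 1"
  have "(1 - t) * x \<le> (1 - t) * max 0 x" "t * y \<le> t * max 0 y"
    using t by (auto intro!: mult_left_mono)
  then have "max 0 ((1 - t) * x + t * y) \<le> (1 - t) * max 0 x + t * max 0 y"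
    using t by (simp only: max.bounded_iff) (auto intro: add_mono)
  then have "G (max 0 ((1 - t) * x + t * y)) \<le> G ((1 - t) * max 0 x + t * max 0 y)"
    using assms(2) t unfolding mono_on_def by (auto intro!: add_nonneg_nonneg)
  also have "\<dots> \<le> (1 - t) * G (max 0 x) + t * G (max 0 y)"
    using convex_onD[OF assms(1), of t "max 0 x" "max 0 y"] t by simp
  finally show "G (max 0 ((1 - t) *\<^sub>R x + t *\<^sub>R y)) \<le> (1 - t) * G (max 0 x) + t * G (max 0 y)"
    by simp
qed simp

lemma orlicz_space_measurable: "X \<in> orlicz_space M G \<Longrightarrow> X \<in> borel_measurable M"
  by (simp add: orlicz_space_def)

lemma orlicz_space_modular_integrable:
  assumes "mono_on {0..} G" "\<And>t. 0 \<le> t \<Longrightarrow> 0 \<le> G t" "X \<in> orlicz_space M G"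
  obtains c where "0 < c" "integrable M (\<lambda>\<omega>. G (\<bar>X \<omega>\<bar> / c))"
proof -
  obtain c where c: "0 < c" "(\<integral>\<^sup>+ \<omega>. ennreal (G (\<bar>X \<omega>\<bar> / c)) \<partial>M) \<le> 1"
    and [measurable]: "X \<in> borel_measurable M"
    using assms(3) unfolding orlicz_space_def by auto
  have "(\<lambda>\<omega>. G (max 0 (\<bar>X \<omega>\<bar> / c))) \<in> borel_measurable M"
    using borel_measurable_mono[OF mono_comp_max_zero[OF assms(1)]] by measurable
  then have "(\<lambda>\<omega>. G (\<bar>X \<omega>\<bar> / c)) \<in> borel_measurable M"
    using c(1) by (simp add: max_def)
  then have "integrable M (\<lambda>\<omega>. G (\<bar>X \<omega>\<bar> / c))"
    by (rule integrableI_nonneg) (use c assms(2) in \<open>auto intro: le_less_trans\<close>)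
  with c(1) show ?thesis by (rule that)
qed

lemma integrable_mult_orlicz:
  assumes "orlicz_function \<Phi>" "0 < c" "0 < d"
    and [measurable]: "f \<in> borel_measurable M" "g \<in> borel_measurable M"
    and "integrable M (\<lambda>\<omega>. \<Phi> (\<bar>f \<omega>\<bar> / c))" "integrable M (\<lambda>\<omega>. orlicz_conj \<Phi> (\<bar>g \<omega>\<bar> / d))"
  shows "integrable M (\<lambda>\<omega>. f \<omega> * g \<omega>)"
proof (rule Bochner_Integration.integrable_bound)
  show "integrable M (\<lambda>\<omega>. c * d * (\<Phi> (\<bar>f \<omega>\<bar> / c) + orlicz_conj \<Phi> (\<bar>g \<omega>\<bar> / d)))"
    using assms by simp
  show "AE \<omega> in M. norm (f \<omega> * g \<omega>) \<le> norm (c * d * (\<Phi> (\<bar>f \<omega>\<bar> / c) + orlicz_conj \<Phi> (\<bar>g \<omega>\<bar> / d)))"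
  proof (rule AE_I2)
    fix \<omega>
    have "\<bar>f \<omega> * g \<omega>\<bar> = c * d * ((\<bar>f \<omega>\<bar> / c) * (\<bar>g \<omega>\<bar> / d))"
      using assms(2,3) by (simp add: abs_mult)
    also have "\<dots> \<le> c * d * (\<Phi> (\<bar>f \<omega>\<bar> / c) + orlicz_conj \<Phi> (\<bar>g \<omega>\<bar> / d))"
      using assms(1-3) by (intro mult_left_mono fenchel_young) auto
    finally show "norm (f \<omega> * g \<omega>) \<le> norm (c * d * (\<Phi> (\<bar>f \<omega>\<bar> / c) + orlicz_conj \<Phi> (\<bar>g \<omega>\<bar> / d)))"
      by simp
  qed
qed measurable

lemma (in finite_measure) integrable_orlicz_pair:
  assumes "orlicz_function \<Phi>" "0 < c" "0 < d"
    and [measurable]: "X \<in> borel_measurable M" "Y \<in> borel_measurable M"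
    and "integrable M (\<lambda>\<omega>. \<Phi> (\<bar>X \<omega>\<bar> / c))" "integrable M (\<lambda>\<omega>. orlicz_conj \<Phi> (\<bar>Y \<omega>\<bar> / d))"
  shows "integrable M X" "integrable M Y" "integrable M (\<lambda>\<omega>. X \<omega> * Y \<omega>)"
proof -
  show "integrable M (\<lambda>\<omega>. X \<omega> * Y \<omega>)"
    using assms by (rule integrable_mult_orlicz)
  have "integrable M (\<lambda>\<omega>. X \<omega> * 1)"
    using assms(1,2,4,6) by (intro integrable_mult_orlicz[where d=1]) auto
  then show "integrable M X" by simp
  have "integrable M (\<lambda>\<omega>. 1 * Y \<omega>)"
    using assms(1,3,5,7) by (intro integrable_mult_orlicz[where c=1]) auto
  then show "integrable M Y" by simp
qed

lemma fin_partitions_sigma_finite_subalgebra: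
  assumes "prob_space M" "\<pi> \<in> fin_partitions M"
  shows "sigma_finite_subalgebra M (sigma (space M) \<pi>)"
proof -
  have sub: "\<pi> \<subseteq> sets M" "\<pi> \<subseteq> Pow (space M)"
    using assms(2) sets.sets_into_space by (auto simp: fin_partitions_def)
  have "sigma_sets (space M) \<pi> \<subseteq> sets M" by (rule sets.sigma_sets_subset[OF sub(1)])
  then have "subalgebra M (sigma (space M) \<pi>)"
    unfolding subalgebra_def using sub
    by (simp add: sets_measure_of[OF sub(2)] space_measure_of[OF sub(2)])
  with assms(1) show ?thesis
    by (intro finite_measure_subalgebra_is_sigma_finite)
       (simp add: prob_space_def finite_measure_subalgebra_def finite_measure_subalgebra_axioms_def)
qed

definition blockwise_constant :: "'a set set \<Rightarrow> ('a \<Rightarrow> 'b) \<Rightarrow> bool" where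
  "blockwise_constant \<pi> f \<longleftrightarrow> (\<forall>A\<in>\<pi>. \<forall>x\<in>A. \<forall>y\<in>A. f x = f y)"

lemma blockwise_constant_refines:
  assumes "blockwise_constant \<pi>\<^sub>0 f" "refines \<pi> \<pi>\<^sub>0"
  shows "blockwise_constant \<pi> f"
  unfolding blockwise_constant_def
proof (intro ballI)
  fix B x y assume "B \<in> \<pi>" "x \<in> B" "y \<in> B"
  then obtain A where "A \<in> \<pi>\<^sub>0" "x \<in> A" "y \<in> A"
    using assms(2) unfolding refines_def by blast
  then show "f x = f y" using assms(1) unfolding blockwise_constant_def by blast
qed

lemma blockwise_constant_measurable:
  fixes f :: "'a \<Rightarrow> real"
  assumes "\<pi> \<in> fin_partitions M" "blockwise_constant \<pi> f"
  shows "f \<in> borel_measurable (sigma (space M) \<pi>)"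
proof -
  have sub: "\<pi> \<subseteq> Pow (space M)" and fin: "finite \<pi>" and dj: "disjoint \<pi>"
    and un: "\<Union>\<pi> = space M"
    using assms(1) sets.sets_into_space by (auto simp: fin_partitions_def)
  define v where "v A = f (SOME x. x \<in> A)" for A
  have f_eq: "f x = (\<Sum>A\<in>\<pi>. v A * indicator A x)" if x: "x \<in> space M" for x
  proof -
    obtain A where A: "A \<in> \<pi>" "x \<in> A" using x un by auto
    have "(\<Sum>B\<in>\<pi>. v B * indicator B x) = v A * indicator A x + (\<Sum>B\<in>\<pi>-{A}. v B * indicator B x)"
      by (rule sum.remove[OF fin A(1)])
    also have "(\<Sum>B\<in>\<pi>-{A}. v B * indicator B x) = 0"
      using dj A by (intro sum.neutral) (auto simp: disjoint_def indicator_def)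
    finally have "(\<Sum>B\<in>\<pi>. v B * indicator B x) = v A"
      using A by simp
    also have "v A = f x"
      unfolding v_def using assms(2) A by (metis blockwise_constant_def someI)
    finally show ?thesis by simp
  qed
  have "(\<lambda>x. \<Sum>A\<in>\<pi>. v A * indicator A x) \<in> borel_measurable (sigma (space M) \<pi>)"
    by (intro borel_measurable_sum borel_measurable_times borel_measurable_const borel_measurable_indicator)
       (auto simp: sets_measure_of[OF sub])
  then show ?thesis
    by (rule measurable_cong[THEN iffD1, rotated]) (simp add: space_measure_of[OF sub] f_eq)
qed

text \<open>The level sets of \<open>S\<close> almost form an admissible partition; those of probability zero are
  merged into a level set of positive probability.\<close>
lemma finite_range_ae_eq_blockwise_constant:
  fixes S :: "'a \<Rightarrow> real"
  assumes "prob_space M" and [measurable]: "S \<in> borel_measurable M" and "finite (S ` space M)"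
  obtains \<pi>\<^sub>0 S' where "\<pi>\<^sub>0 \<in> fin_partitions M" "blockwise_constant \<pi>\<^sub>0 S'"
    "AE x in M. S x = S' x" "\<And>x. x \<in> space M \<Longrightarrow> S' x \<in> S ` space M"
proof -
  interpret prob_space M by fact
  define P where "P = {v \<in> S ` space M. 0 < prob (S -` {v} \<inter> space M)}"
  have "finite P" using assms(3) by (simp add: P_def)
  have "AE x in M. S x \<noteq> v" if "v \<in> S ` space M - P" for v
  proof (rule AE_I')
    show "S -` {v} \<inter> space M \<in> null_sets M"
      using that measure_nonneg[of M "S -` {v} \<inter> space M"]
      by (auto simp: P_def null_sets_def emeasure_eq_measure)
  qed auto
  then have "AE x in M. \<forall>v \<in> S ` space M - P. S x \<noteq> v"
    using assms(3) by (subst AE_finite_all) auto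
  then have S_in_P: "AE x in M. S x \<in> P"
    using AE_space by eventually_elim (auto simp: P_def)
  have "P \<noteq> {}"
  proof
    assume "P = {}"
    with S_in_P show False by simp
  qed
  then obtain v\<^sub>0 where v\<^sub>0: "v\<^sub>0 \<in> P" by blast
  define S' where "S' x = (if x \<in> S -` P \<inter> space M then S x else v\<^sub>0)" for x
  have S'_in_P: "S' x \<in> P" for x using v\<^sub>0 by (simp add: S'_def)
  have "S -` P \<inter> space M \<in> sets M"
    using \<open>finite P\<close> by (intro measurable_sets[OF assms(2)]) (simp add: finite_imp_closed)
  then have S'_measurable: "S' \<in> borel_measurable M"
    unfolding S'_def by (intro measurable_If_set) auto
  define \<pi>\<^sub>0 where "\<pi>\<^sub>0 = (\<lambda>v. S' -` {v} \<inter> space M) ` P"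
  have blocks_measurable: "S' -` {v} \<inter> space M \<in> sets M" for v
    using S'_measurable by (simp add: measurable_sets)
  have "\<pi>\<^sub>0 \<in> fin_partitions M"
    unfolding fin_partitions_def
  proof (intro CollectI conjI)
    show "finite \<pi>\<^sub>0" "\<pi>\<^sub>0 \<subseteq> sets M"
      unfolding \<pi>\<^sub>0_def using \<open>finite P\<close> blocks_measurable by auto
    show "disjoint \<pi>\<^sub>0" "\<Union>\<pi>\<^sub>0 = space M"
      unfolding \<pi>\<^sub>0_def disjoint_def using S'_in_P by auto
    show "\<forall>A\<in>\<pi>\<^sub>0. 0 < prob A"
    proof
      fix A assume "A \<in> \<pi>\<^sub>0"
      then obtain v where v: "v \<in> P" "A = S' -` {v} \<inter> space M" unfolding \<pi>\<^sub>0_def by auto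
      then have "prob (S -` {v} \<inter> space M) \<le> prob A"
        using blocks_measurable by (intro finite_measure_mono) (auto simp: S'_def)
      with v show "0 < prob A" unfolding P_def by auto
    qed
  qed
  moreover have "blockwise_constant \<pi>\<^sub>0 S'" unfolding blockwise_constant_def \<pi>\<^sub>0_def by auto
  moreover have "AE x in M. S x = S' x" using S_in_P AE_space by eventually_elim (simp add: S'_def)
  moreover have "S' x \<in> S ` space M" for x using S'_in_P by (auto simp: P_def)
  ultimately show ?thesis using that by blast
qed

lemma floor_multiple_bounds:
  fixes x \<delta> :: real
  assumes "0 < \<delta>"
  shows "\<delta> * of_int \<lfloor>x / \<delta>\<rfloor> \<le> x" "x < \<delta> * of_int \<lfloor>x / \<delta>\<rfloor> + \<delta>"
proof -
  have "of_int \<lfloor>x / \<delta>\<rfloor> \<le> x / \<delta>" "x / \<delta> < of_int \<lfloor>x / \<delta>\<rfloor> + 1"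
    by linarith+
  then have "of_int \<lfloor>x / \<delta>\<rfloor> * \<delta> \<le> x" "x < (of_int \<lfloor>x / \<delta>\<rfloor> + 1) * \<delta>"
    unfolding pos_le_divide_eq[OF assms] pos_divide_less_eq[OF assms] .
  then show "\<delta> * of_int \<lfloor>x / \<delta>\<rfloor> \<le> x" "x < \<delta> * of_int \<lfloor>x / \<delta>\<rfloor> + \<delta>"
    by (simp_all add: algebra_simps)
qed

text \<open>Up to a null set, \<open>S\<close> rounds \<open>X\<close> down to the grid \<open>\<delta>\<int>\<close> on \<open>{\<bar>X\<bar> \<le> n}\<close> and vanishes elsewhere.\<close>
lemma discretization_blockwise_constant:
  fixes X :: "'a \<Rightarrow> real" and \<delta> n :: real
  assumes "prob_space M" and [measurable]: "X \<in> borel_measurable M" and "0 < \<delta>" "0 \<le> n"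
  obtains \<pi>\<^sub>0 S where "\<pi>\<^sub>0 \<in> fin_partitions M" "blockwise_constant \<pi>\<^sub>0 S"
    "\<And>\<omega>. \<omega> \<in> space M \<Longrightarrow> \<bar>S \<omega>\<bar> \<le> n + \<delta>"
    "AE \<omega> in M. \<bar>X \<omega> - S \<omega>\<bar> \<le> \<delta> + (if n < \<bar>X \<omega>\<bar> then \<bar>X \<omega>\<bar> else 0)"
proof -
  define D where "D \<omega> = (if \<bar>X \<omega>\<bar> \<le> n then \<delta> * of_int \<lfloor>X \<omega> / \<delta>\<rfloor> else 0)" for \<omega>
  have "D \<in> borel_measurable M" unfolding D_def by measurable
  have D_bounds: "\<bar>X \<omega> - D \<omega>\<bar> \<le> \<delta> + (if n < \<bar>X \<omega>\<bar> then \<bar>X \<omega>\<bar> else 0) \<and> \<bar>D \<omega>\<bar> \<le> n + \<delta>" for \<omega>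
    using floor_multiple_bounds[OF \<open>0 < \<delta>\<close>, of "X \<omega>"] assms(3,4) by (auto simp: D_def)
  have "D ` space M \<subseteq> insert 0 ((\<lambda>k. \<delta> * of_int k) ` {\<lfloor>- n / \<delta>\<rfloor>..\<lfloor>n / \<delta>\<rfloor>})"
  proof
    fix v assume "v \<in> D ` space M"
    then obtain \<omega> where v: "v = D \<omega>" by blast
    have "- n / \<delta> \<le> X \<omega> / \<delta> \<and> X \<omega> / \<delta> \<le> n / \<delta>" if "\<bar>X \<omega>\<bar> \<le> n"
      using that assms(3) by (intro conjI divide_right_mono) auto
    then show "v \<in> insert 0 ((\<lambda>k. \<delta> * of_int k) ` {\<lfloor>- n / \<delta>\<rfloor>..\<lfloor>n / \<delta>\<rfloor>})"
      unfolding v D_def by (auto intro!: imageI floor_mono)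
  qed
  then have "finite (D ` space M)" by (rule finite_subset) simp
  then obtain \<pi>\<^sub>0 S where "\<pi>\<^sub>0 \<in> fin_partitions M" "blockwise_constant \<pi>\<^sub>0 S"
      and DS: "AE \<omega> in M. D \<omega> = S \<omega>" and S_range: "\<And>\<omega>. \<omega> \<in> space M \<Longrightarrow> S \<omega> \<in> D ` space M"
    using finite_range_ae_eq_blockwise_constant[OF assms(1) \<open>D \<in> borel_measurable M\<close>] by blast
  moreover have "\<bar>S \<omega>\<bar> \<le> n + \<delta>" if "\<omega> \<in> space M" for \<omega>
    using S_range[OF that] D_bounds by auto
  moreover have "AE \<omega> in M. \<bar>X \<omega> - S \<omega>\<bar> \<le> \<delta> + (if n < \<bar>X \<omega>\<bar> then \<bar>X \<omega>\<bar> else 0)"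
    using DS by eventually_elim (metis D_bounds)
  ultimately show ?thesis using that by blast
qed

definition tail_integral :: "'a measure \<Rightarrow> ('a \<Rightarrow> real) \<Rightarrow> ('a \<Rightarrow> real) \<Rightarrow> real \<Rightarrow> real" where
  "tail_integral M h g n = (\<integral>\<omega>. (if n < \<bar>g \<omega>\<bar> then h \<omega> else 0) \<partial>M)"

lemma tendsto_tail_integral:
  fixes h g :: "'a \<Rightarrow> real"
  assumes "integrable M h" and [measurable]: "g \<in> borel_measurable M"
  shows "(tail_integral M h g \<longlongrightarrow> 0) at_top"
proof -
  have [measurable]: "h \<in> borel_measurable M" using assms(1) by simp
  have "((\<lambda>n. \<integral>\<omega>. (if n < \<bar>g \<omega>\<bar> then h \<omega> else 0) \<partial>M) \<longlongrightarrow> (\<integral>\<omega>. 0 \<partial>M)) at_top"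
  proof (rule integral_dominated_convergence_at_top[where w="\<lambda>\<omega>. \<bar>h \<omega>\<bar>"])
    show "AE \<omega> in M. ((\<lambda>n. if n < \<bar>g \<omega>\<bar> then h \<omega> else 0) \<longlongrightarrow> 0) at_top"
    proof (rule AE_I2)
      fix \<omega>
      have "\<forall>\<^sub>F n in at_top. (if n < \<bar>g \<omega>\<bar> then h \<omega> else 0) = 0"
        using eventually_ge_at_top[of "\<bar>g \<omega>\<bar>"] by eventually_elim auto
      then show "((\<lambda>n. if n < \<bar>g \<omega>\<bar> then h \<omega> else 0) \<longlongrightarrow> 0) at_top"
        by (rule tendsto_eventually)
    qed
  qed (use assms(1) in auto)
  then show ?thesis by (simp add: tail_integral_def[abs_def])
qed

lemma integrable_if_zero:
  fixes f :: "'a \<Rightarrow> real"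
  assumes "integrable M f" "{\<omega> \<in> space M. P \<omega>} \<in> sets M"
  shows "integrable M (\<lambda>\<omega>. if P \<omega> then f \<omega> else 0)"
proof -
  have "integrable M (\<lambda>\<omega>. f \<omega> * indicator {\<omega> \<in> space M. P \<omega>} \<omega>)"
    using assms(2,1) by (rule integrable_real_mult_indicator)
  then show ?thesis
    by (rule Bochner_Integration.integrable_cong[THEN iffD1, OF refl, rotated]) (simp add: indicator_def)
qed

context sigma_finite_subalgebra
begin

lemma real_cond_exp_abs_le:
  assumes "integrable M f"
  shows "AE x in M. \<bar>real_cond_exp M F f x\<bar> \<le> real_cond_exp M F (\<lambda>x. \<bar>f x\<bar>) x"
proof -
  have "AE x in M. real_cond_exp M F f x \<le> real_cond_exp M F (\<lambda>x. \<bar>f x\<bar>) x"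
    using assms by (intro real_cond_exp_mono) auto
  moreover have "AE x in M. real_cond_exp M F (\<lambda>x. -1 * f x) x \<le> real_cond_exp M F (\<lambda>x. \<bar>f x\<bar>) x"
    using assms by (intro real_cond_exp_mono) auto
  moreover have "AE x in M. real_cond_exp M F (\<lambda>x. -1 * f x) x = -1 * real_cond_exp M F f x"
    using assms by (rule real_cond_exp_cmult)
  ultimately show ?thesis by eventually_elim auto
qed

lemma real_cond_exp_orlicz_jensen:
  assumes "orlicz_function \<Phi>" "0 < c" "integrable M f" "integrable M (\<lambda>x. \<Phi> (\<bar>f x\<bar> / c))"
  shows "AE x in M. \<Phi> (real_cond_exp M F (\<lambda>x. \<bar>f x\<bar>) x / c) \<le> real_cond_exp M F (\<lambda>x. \<Phi> (\<bar>f x\<bar> / c)) x"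
proof -
  define q where "q t = \<Phi> (max 0 t)" for t
  have \<Phi>: "convex_on {0..} \<Phi>" "mono_on {0..} \<Phi>" using assms(1) by (auto simp: orlicz_function_def)
  have q_abs: "q (\<bar>f x\<bar> / c) = \<Phi> (\<bar>f x\<bar> / c)" for x using assms(2) by (simp add: q_def)
  have "AE x in M. q (real_cond_exp M F (\<lambda>x. \<bar>f x\<bar> / c) x) \<le> real_cond_exp M F (\<lambda>x. q (\<bar>f x\<bar> / c)) x"
    using assms(2-4)
    by (intro real_cond_exp_jensens_inequality(2)[where I=UNIV])
       (auto simp: q_abs q_def convex_on_comp_max_zero[OF \<Phi>] borel_measurable_mono mono_comp_max_zero[OF \<Phi>(2)])
  moreover have "AE x in M. real_cond_exp M F (\<lambda>x. \<bar>f x\<bar> / c) x = real_cond_exp M F (\<lambda>x. \<bar>f x\<bar>) x / c"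
    using assms(3) by (intro real_cond_exp_cdiv) simp
  moreover have "AE x in M. 0 \<le> real_cond_exp M F (\<lambda>x. \<bar>f x\<bar>) x"
    using assms(3) by (intro real_cond_exp_pos) auto
  ultimately show ?thesis
    by eventually_elim (use assms(2) in \<open>simp add: q_abs q_def\<close>)
qed

text \<open>If \<open>S\<close> is \<open>F\<close>-measurable, then \<open>E[X|F] - X = E[X - S|F] - (X - S)\<close>.\<close>
lemma real_cond_exp_error_le:
  assumes "finite_measure M" "integrable M X" "integrable M S" "S \<in> borel_measurable F" "integrable M R"
    and "AE x in M. \<bar>X x - S x\<bar> \<le> \<delta> + \<bar>R x\<bar>"
  shows "AE x in M. \<bar>real_cond_exp M F X x - X x\<bar> \<le> 2 * \<delta> + \<bar>R x\<bar> + real_cond_exp M F (\<lambda>x. \<bar>R x\<bar>) x"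
proof -
  interpret finite_measure M by fact
  define Z where "Z x = X x - S x" for x
  have Z: "integrable M Z" unfolding Z_def using assms(2,3) by simp
  have "AE x in M. real_cond_exp M F X x = real_cond_exp M F Z x + S x"
  proof -
    have "AE x in M. real_cond_exp M F (\<lambda>x. Z x + S x) x = real_cond_exp M F Z x + real_cond_exp M F S x"
      using Z assms(3) by (rule real_cond_exp_add)
    moreover have "AE x in M. real_cond_exp M F S x = S x"
      using assms(3,4) by (rule real_cond_exp_F_meas)
    moreover have "(\<lambda>x. Z x + S x) = X" by (simp add: Z_def fun_eq_iff)
    ultimately show ?thesis by auto
  qed
  moreover have "AE x in M. \<bar>real_cond_exp M F Z x\<bar> \<le> real_cond_exp M F (\<lambda>x. \<bar>Z x\<bar>) x"
    using Z by (rule real_cond_exp_abs_le)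
  moreover have "AE x in M. real_cond_exp M F (\<lambda>x. \<bar>Z x\<bar>) x \<le> real_cond_exp M F (\<lambda>x. \<delta> + \<bar>R x\<bar>) x"
    using assms(5,6) Z by (intro real_cond_exp_mono) (auto simp: Z_def[abs_def])
  moreover have "AE x in M. real_cond_exp M F (\<lambda>x. \<delta> + \<bar>R x\<bar>) x = \<delta> + real_cond_exp M F (\<lambda>x. \<bar>R x\<bar>) x"
  proof -
    have "AE x in M. real_cond_exp M F (\<lambda>x. \<delta> + \<bar>R x\<bar>) x
        = real_cond_exp M F (\<lambda>x. \<delta>) x + real_cond_exp M F (\<lambda>x. \<bar>R x\<bar>) x"
      using assms(5) by (intro real_cond_exp_add) auto
    moreover have "AE x in M. real_cond_exp M F (\<lambda>x. \<delta>) x = \<delta>"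
      by (intro real_cond_exp_F_meas) auto
    ultimately show ?thesis by eventually_elim simp
  qed
  ultimately show ?thesis
    using assms(6) by eventually_elim (auto simp: Z_def)
qed

lemma real_cond_exp_error_weighted_le_pointwise:
  assumes "finite_measure M" "orlicz_function \<Phi>" "0 < c" "0 < d" "0 \<le> m"
    and "integrable M X" "integrable M S" "S \<in> borel_measurable F"
    and "integrable M R" "integrable M (\<lambda>x. \<Phi> (\<bar>R x\<bar> / c))"
    and "AE x in M. \<bar>X x - S x\<bar> \<le> \<delta> + \<bar>R x\<bar>" "AE x in M. 0 \<le> Y x"
  shows "AE x in M. \<bar>real_cond_exp M F X x - X x\<bar> * Y x \<le>
    2 * \<delta> * \<bar>Y x\<bar> + \<bar>R x\<bar> * \<bar>Y x\<bar> + m * real_cond_exp M F (\<lambda>x. \<bar>R x\<bar>) x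
    + c * d * real_cond_exp M F (\<lambda>x. \<Phi> (\<bar>R x\<bar> / c)) x
    + c * d * (if m < \<bar>Y x\<bar> then orlicz_conj \<Phi> (\<bar>Y x\<bar> / d) else 0)"
proof -
  have "AE x in M. 0 \<le> real_cond_exp M F (\<lambda>x. \<bar>R x\<bar>) x"
    using assms(9) by (intro real_cond_exp_pos) auto
  with real_cond_exp_error_le[OF assms(1,6-9,11)] real_cond_exp_orlicz_jensen[OF assms(2,3,9,10)] assms(12)
  show ?thesis
  proof eventually_elim
    case (elim x)
    define a where "a = real_cond_exp M F (\<lambda>x. \<bar>R x\<bar>) x"
    have "0 \<le> a" using elim(4) unfolding a_def by auto
    have "\<bar>real_cond_exp M F X x - X x\<bar> * Y x \<le> (2 * \<delta> + \<bar>R x\<bar> + a) * Y x"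
      using elim(1,3) unfolding a_def by (rule mult_right_mono)
    also have "\<dots> = 2 * \<delta> * \<bar>Y x\<bar> + \<bar>R x\<bar> * \<bar>Y x\<bar> + a * \<bar>Y x\<bar>"
      using elim(3) by (simp add: algebra_simps)
    also have "a * \<bar>Y x\<bar> \<le> m * a + c * d * (\<Phi> (a / c) + (if m < \<bar>Y x\<bar> then orlicz_conj \<Phi> (\<bar>Y x\<bar> / d) else 0))"
      using assms(2-5) \<open>0 \<le> a\<close> by (intro fenchel_young_split) auto
    also have "\<dots> \<le> m * a + c * d * real_cond_exp M F (\<lambda>x. \<Phi> (\<bar>R x\<bar> / c)) x
        + c * d * (if m < \<bar>Y x\<bar> then orlicz_conj \<Phi> (\<bar>Y x\<bar> / d) else 0)"
      using elim(2) assms(3,4) unfolding a_def by (simp add: distrib_left)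
    finally show ?case unfolding a_def by simp
  qed
qed

lemma real_cond_exp_error_weighted_le:
  fixes X Y S :: "'a \<Rightarrow> real"
  assumes "finite_measure M" "orlicz_function \<Phi>" "0 < c" "0 < d" "0 \<le> m"
    and [measurable]: "X \<in> borel_measurable M" "Y \<in> borel_measurable M"
    and "integrable M (\<lambda>\<omega>. \<Phi> (\<bar>X \<omega>\<bar> / c))" "integrable M (\<lambda>\<omega>. orlicz_conj \<Phi> (\<bar>Y \<omega>\<bar> / d))"
    and "integrable M S" "S \<in> borel_measurable F"
    and "AE \<omega> in M. \<bar>X \<omega> - S \<omega>\<bar> \<le> \<delta> + (if n < \<bar>X \<omega>\<bar> then \<bar>X \<omega>\<bar> else 0)"
    and "AE \<omega> in M. 0 \<le> Y \<omega>"
  shows "(\<integral>\<^sup>+\<omega>. ennreal (\<bar>real_cond_exp M F X \<omega> - X \<omega>\<bar> * Y \<omega>) \<partial>M) \<le> ennreal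
    (2 * \<delta> * (\<integral>\<omega>. \<bar>Y \<omega>\<bar> \<partial>M)
     + tail_integral M (\<lambda>\<omega>. c * d * \<Phi> (\<bar>X \<omega>\<bar> / c) + \<bar>X \<omega>\<bar> * (\<bar>Y \<omega>\<bar> + m)) X n
     + c * d * tail_integral M (\<lambda>\<omega>. orlicz_conj \<Phi> (\<bar>Y \<omega>\<bar> / d)) Y m)"
proof -
  interpret finite_measure M by fact
  note XY = integrable_orlicz_pair[OF assms(2-4,6-9)]
  define R where "R \<omega> = (if n < \<bar>X \<omega>\<bar> then X \<omega> else 0)" for \<omega>
  have R_abs: "\<bar>R \<omega>\<bar> = (if n < \<bar>X \<omega>\<bar> then \<bar>X \<omega>\<bar> else 0)" for \<omega>
    by (simp add: R_def)
  have \<Phi>_zero: "\<Phi> 0 = 0" using assms(2) by (simp add: orlicz_function_def)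
  then have \<Phi>_R: "\<Phi> (\<bar>R \<omega>\<bar> / c) = (if n < \<bar>X \<omega>\<bar> then \<Phi> (\<bar>X \<omega>\<bar> / c) else 0)" for \<omega>
    by (simp add: R_def)
  have R_int: "integrable M R"
    unfolding R_def using XY(1) by (intro integrable_if_zero) auto
  have \<Phi>_R_int: "integrable M (\<lambda>\<omega>. \<Phi> (\<bar>R \<omega>\<bar> / c))"
    unfolding \<Phi>_R using assms(8) by (intro integrable_if_zero) auto
  have "integrable M (\<lambda>\<omega>. if n < \<bar>X \<omega>\<bar> then \<bar>X \<omega> * Y \<omega>\<bar> else 0)"
    using XY(3) by (intro integrable_if_zero) auto
  moreover have "(\<lambda>\<omega>. if n < \<bar>X \<omega>\<bar> then \<bar>X \<omega> * Y \<omega>\<bar> else 0) = (\<lambda>\<omega>. \<bar>R \<omega>\<bar> * \<bar>Y \<omega>\<bar>)"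
    by (auto simp: R_abs abs_mult)
  ultimately have RY_int: "integrable M (\<lambda>\<omega>. \<bar>R \<omega>\<bar> * \<bar>Y \<omega>\<bar>)" by simp
  have \<Psi>_tail_int: "integrable M (\<lambda>\<omega>. if m < \<bar>Y \<omega>\<bar> then orlicz_conj \<Phi> (\<bar>Y \<omega>\<bar> / d) else 0)"
    using assms(9) by (intro integrable_if_zero) auto
  define bd where "bd \<omega> = 2 * \<delta> * \<bar>Y \<omega>\<bar> + \<bar>R \<omega>\<bar> * \<bar>Y \<omega>\<bar> + m * real_cond_exp M F (\<lambda>\<omega>. \<bar>R \<omega>\<bar>) \<omega>
    + c * d * real_cond_exp M F (\<lambda>\<omega>. \<Phi> (\<bar>R \<omega>\<bar> / c)) \<omega>
    + c * d * (if m < \<bar>Y \<omega>\<bar> then orlicz_conj \<Phi> (\<bar>Y \<omega>\<bar> / d) else 0)" for \<omega>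
  have pointwise: "AE \<omega> in M. \<bar>real_cond_exp M F X \<omega> - X \<omega>\<bar> * Y \<omega> \<le> bd \<omega>"
    unfolding bd_def using assms(12)
    by (intro real_cond_exp_error_weighted_le_pointwise[OF assms(1-5) XY(1) assms(10,11) R_int \<Phi>_R_int _ assms(13)])
       (simp add: R_abs)
  have "tail_integral M (\<lambda>\<omega>. c * d * \<Phi> (\<bar>X \<omega>\<bar> / c) + \<bar>X \<omega>\<bar> * (\<bar>Y \<omega>\<bar> + m)) X n
      = (\<integral>\<omega>. \<bar>R \<omega>\<bar> * \<bar>Y \<omega>\<bar> + m * \<bar>R \<omega>\<bar> + c * d * \<Phi> (\<bar>R \<omega>\<bar> / c) \<partial>M)"
    unfolding tail_integral_def
    by (intro Bochner_Integration.integral_cong) (auto simp: R_def \<Phi>_zero algebra_simps)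
  also have "\<dots> = (\<integral>\<omega>. \<bar>R \<omega>\<bar> * \<bar>Y \<omega>\<bar> \<partial>M) + m * (\<integral>\<omega>. \<bar>R \<omega>\<bar> \<partial>M) + c * d * (\<integral>\<omega>. \<Phi> (\<bar>R \<omega>\<bar> / c) \<partial>M)"
    using RY_int R_int \<Phi>_R_int by simp
  finally have tail_eq: "tail_integral M (\<lambda>\<omega>. c * d * \<Phi> (\<bar>X \<omega>\<bar> / c) + \<bar>X \<omega>\<bar> * (\<bar>Y \<omega>\<bar> + m)) X n
    = (\<integral>\<omega>. \<bar>R \<omega>\<bar> * \<bar>Y \<omega>\<bar> \<partial>M) + m * (\<integral>\<omega>. \<bar>R \<omega>\<bar> \<partial>M) + c * d * (\<integral>\<omega>. \<Phi> (\<bar>R \<omega>\<bar> / c) \<partial>M)" .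
  have bd_int: "integrable M bd"
    unfolding bd_def using XY(2) RY_int R_int \<Phi>_R_int \<Psi>_tail_int
    by (intro Bochner_Integration.integrable_add integrable_mult_right real_cond_exp_int(1)) auto
  have "(\<integral>\<omega>. bd \<omega> \<partial>M) = 2 * \<delta> * (\<integral>\<omega>. \<bar>Y \<omega>\<bar> \<partial>M)
     + tail_integral M (\<lambda>\<omega>. c * d * \<Phi> (\<bar>X \<omega>\<bar> / c) + \<bar>X \<omega>\<bar> * (\<bar>Y \<omega>\<bar> + m)) X n
     + c * d * tail_integral M (\<lambda>\<omega>. orlicz_conj \<Phi> (\<bar>Y \<omega>\<bar> / d)) Y m"
    unfolding bd_def tail_eq using XY(2) RY_int R_int \<Phi>_R_int \<Psi>_tail_int
    by (simp add: real_cond_exp_int tail_integral_def)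
  moreover have "AE \<omega> in M. 0 \<le> bd \<omega>"
    using pointwise assms(13) by eventually_elim (metis abs_ge_zero mult_nonneg_nonneg order_trans)
  moreover have "(\<integral>\<^sup>+\<omega>. ennreal (\<bar>real_cond_exp M F X \<omega> - X \<omega>\<bar> * Y \<omega>) \<partial>M) \<le> (\<integral>\<^sup>+\<omega>. ennreal (bd \<omega>) \<partial>M)"
    using pointwise by (intro nn_integral_mono_AE) (auto elim!: AE_mp intro: ennreal_leI)
  ultimately show ?thesis
    using nn_integral_eq_integral[OF bd_int] by simp
qed

end

lemma (in finite_measure) truncation_levels:
  assumes "orlicz_function \<Phi>" "0 < c" "0 < d"
    and [measurable]: "X \<in> borel_measurable M" "Y \<in> borel_measurable M"
    and \<Phi>X: "integrable M (\<lambda>\<omega>. \<Phi> (\<bar>X \<omega>\<bar> / c))" and \<Psi>Y: "integrable M (\<lambda>\<omega>. orlicz_conj \<Phi> (\<bar>Y \<omega>\<bar> / d))"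
    and "0 < \<epsilon>"
  obtains \<delta> n m where "0 < \<delta>" "0 \<le> n" "0 \<le> m"
    "2 * \<delta> * (\<integral>\<omega>. \<bar>Y \<omega>\<bar> \<partial>M)
     + tail_integral M (\<lambda>\<omega>. c * d * \<Phi> (\<bar>X \<omega>\<bar> / c) + \<bar>X \<omega>\<bar> * (\<bar>Y \<omega>\<bar> + m)) X n
     + c * d * tail_integral M (\<lambda>\<omega>. orlicz_conj \<Phi> (\<bar>Y \<omega>\<bar> / d)) Y m < \<epsilon>"
proof -
  note XY = integrable_orlicz_pair[OF assms(1-7)]
  have "\<forall>\<^sub>F m in at_top. 0 \<le> m \<and>
      c * d * tail_integral M (\<lambda>\<omega>. orlicz_conj \<Phi> (\<bar>Y \<omega>\<bar> / d)) Y m < \<epsilon> / 3"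
    using \<Psi>Y \<open>0 < \<epsilon>\<close>
    by (intro eventually_conj eventually_ge_at_top order_tendstoD(2)[OF tendsto_mult_right_zero]
        tendsto_tail_integral) auto
  then obtain m where "0 \<le> m"
    and m: "c * d * tail_integral M (\<lambda>\<omega>. orlicz_conj \<Phi> (\<bar>Y \<omega>\<bar> / d)) Y m < \<epsilon> / 3"
    by (auto simp: eventually_at_top_linorder)
  have "integrable M (\<lambda>\<omega>. c * d * \<Phi> (\<bar>X \<omega>\<bar> / c) + \<bar>X \<omega>\<bar> * (\<bar>Y \<omega>\<bar> + m))"
    using \<Phi>X XY by (simp add: distrib_left abs_mult[symmetric])
  then have "\<forall>\<^sub>F n in at_top. 0 \<le> n \<and>
      tail_integral M (\<lambda>\<omega>. c * d * \<Phi> (\<bar>X \<omega>\<bar> / c) + \<bar>X \<omega>\<bar> * (\<bar>Y \<omega>\<bar> + m)) X n < \<epsilon> / 3"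
    using \<open>0 < \<epsilon>\<close> by (intro eventually_conj eventually_ge_at_top order_tendstoD(2)[OF tendsto_tail_integral]) auto
  then obtain n where "0 \<le> n"
    and n: "tail_integral M (\<lambda>\<omega>. c * d * \<Phi> (\<bar>X \<omega>\<bar> / c) + \<bar>X \<omega>\<bar> * (\<bar>Y \<omega>\<bar> + m)) X n < \<epsilon> / 3"
    by (auto simp: eventually_at_top_linorder)
  define EY where "EY = (\<integral>\<omega>. \<bar>Y \<omega>\<bar> \<partial>M)"
  define \<delta> where "\<delta> = \<epsilon> / (6 * (EY + 1))"
  have "0 \<le> EY" by (simp add: EY_def)
  then have "0 < \<delta>" using \<open>0 < \<epsilon>\<close> by (simp add: \<delta>_def)
  have "2 * \<delta> * EY = \<epsilon> / 3 * (EY / (EY + 1))"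
    using \<open>0 \<le> EY\<close> by (simp add: \<delta>_def field_simps)
  also have "\<dots> < \<epsilon> / 3 * 1"
    using \<open>0 \<le> EY\<close> \<open>0 < \<epsilon>\<close> by (intro mult_strict_left_mono) auto
  finally have "2 * \<delta> * (\<integral>\<omega>. \<bar>Y \<omega>\<bar> \<partial>M) < \<epsilon> / 3" by (simp add: EY_def)
  then show ?thesis
    by (intro that[OF \<open>0 < \<delta>\<close> \<open>0 \<le> n\<close> \<open>0 \<le> m\<close>]) (use m n in linarith)
qed

lemma (in prob_space) cond_exp_error_uniformly_small:
  assumes \<Phi>: "orlicz_function \<Phi>"
    and X: "X \<in> orlicz_space M \<Phi>" and Y: "Y \<in> orlicz_space M (orlicz_conj \<Phi>)"
    and "AE \<omega> in M. 0 \<le> Y \<omega>" "0 < \<epsilon>"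
  obtains \<delta> n where "0 < \<delta>" "0 \<le> n"
    "\<And>F S. sigma_finite_subalgebra M F \<Longrightarrow> integrable M S \<Longrightarrow> S \<in> borel_measurable F \<Longrightarrow>
      AE \<omega> in M. \<bar>X \<omega> - S \<omega>\<bar> \<le> \<delta> + (if n < \<bar>X \<omega>\<bar> then \<bar>X \<omega>\<bar> else 0) \<Longrightarrow>
      (\<integral>\<^sup>+\<omega>. ennreal (\<bar>real_cond_exp M F X \<omega> - X \<omega>\<bar> * Y \<omega>) \<partial>M) < ennreal \<epsilon>"
proof -
  note X_meas = orlicz_space_measurable[OF X] and Y_meas = orlicz_space_measurable[OF Y]
  have "mono_on {0..} \<Phi>" using \<Phi> by (simp add: orlicz_function_def)
  then obtain c where "0 < c" and \<Phi>X: "integrable M (\<lambda>\<omega>. \<Phi> (\<bar>X \<omega>\<bar> / c))"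
    using orlicz_space_modular_integrable[OF _ orlicz_function_nonneg[OF \<Phi>] X] by blast
  obtain d where "0 < d" and \<Psi>Y: "integrable M (\<lambda>\<omega>. orlicz_conj \<Phi> (\<bar>Y \<omega>\<bar> / d))"
    using orlicz_space_modular_integrable[OF orlicz_conj_mono[OF \<Phi>] orlicz_conj_nonneg[OF \<Phi>] Y] by blast
  obtain \<delta> n m where "0 < \<delta>" "0 \<le> n" "0 \<le> m" and small:
    "2 * \<delta> * (\<integral>\<omega>. \<bar>Y \<omega>\<bar> \<partial>M)
     + tail_integral M (\<lambda>\<omega>. c * d * \<Phi> (\<bar>X \<omega>\<bar> / c) + \<bar>X \<omega>\<bar> * (\<bar>Y \<omega>\<bar> + m)) X n
     + c * d * tail_integral M (\<lambda>\<omega>. orlicz_conj \<Phi> (\<bar>Y \<omega>\<bar> / d)) Y m < \<epsilon>"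
    using truncation_levels[OF \<Phi> \<open>0 < c\<close> \<open>0 < d\<close> X_meas Y_meas \<Phi>X \<Psi>Y \<open>0 < \<epsilon>\<close>] by blast
  show ?thesis
  proof (rule that[OF \<open>0 < \<delta>\<close> \<open>0 \<le> n\<close>])
    fix F S assume "sigma_finite_subalgebra M F" "integrable M S" "S \<in> borel_measurable F"
      and "AE \<omega> in M. \<bar>X \<omega> - S \<omega>\<bar> \<le> \<delta> + (if n < \<bar>X \<omega>\<bar> then \<bar>X \<omega>\<bar> else 0)"
    then have "(\<integral>\<^sup>+\<omega>. ennreal (\<bar>real_cond_exp M F X \<omega> - X \<omega>\<bar> * Y \<omega>) \<partial>M) \<le> ennreal
      (2 * \<delta> * (\<integral>\<omega>. \<bar>Y \<omega>\<bar> \<partial>M)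
       + tail_integral M (\<lambda>\<omega>. c * d * \<Phi> (\<bar>X \<omega>\<bar> / c) + \<bar>X \<omega>\<bar> * (\<bar>Y \<omega>\<bar> + m)) X n
       + c * d * tail_integral M (\<lambda>\<omega>. orlicz_conj \<Phi> (\<bar>Y \<omega>\<bar> / d)) Y m)"
      by (intro sigma_finite_subalgebra.real_cond_exp_error_weighted_le[OF _ finite_measure_axioms
            \<Phi> \<open>0 < c\<close> \<open>0 < d\<close> \<open>0 \<le> m\<close> X_meas Y_meas \<Phi>X \<Psi>Y] assms(4))
    also have "\<dots> < ennreal \<epsilon>"
      using small \<open>0 < \<epsilon>\<close> by (intro ennreal_lessI) auto
    finally show "(\<integral>\<^sup>+\<omega>. ennreal (\<bar>real_cond_exp M F X \<omega> - X \<omega>\<bar> * Y \<omega>) \<partial>M) < ennreal \<epsilon>" .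
  qed
qed

theorem proposition3p2:
  fixes M :: "'a measure" and \<Phi> :: "real \<Rightarrow> real" and X Y :: "'a \<Rightarrow> real"
  assumes "prob_space M" and "nonatomic M"
    and "orlicz_function \<Phi>"
    and "X \<in> orlicz_space M \<Phi>"
    and "Y \<in> orlicz_space M (orlicz_conj \<Phi>)"
    and "AE \<omega> in M. 0 \<le> Y \<omega>"
  shows "\<forall>\<epsilon>>0. \<exists>\<pi>\<^sub>0\<in>fin_partitions M. \<forall>\<pi>\<in>fin_partitions M. refines \<pi> \<pi>\<^sub>0 \<longrightarrow>
           (\<integral>\<^sup>+ \<omega>. ennreal (\<bar>cond_exp_part M \<pi> X \<omega> - X \<omega>\<bar> * Y \<omega>) \<partial>M) < ennreal \<epsilon>"
proof (intro allI impI)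
  fix \<epsilon> :: real assume "0 < \<epsilon>"
  interpret prob_space M by fact
  obtain \<delta> n where "0 < \<delta>" "0 \<le> n" and small: "\<And>F S. sigma_finite_subalgebra M F \<Longrightarrow> integrable M S \<Longrightarrow>
      S \<in> borel_measurable F \<Longrightarrow> AE \<omega> in M. \<bar>X \<omega> - S \<omega>\<bar> \<le> \<delta> + (if n < \<bar>X \<omega>\<bar> then \<bar>X \<omega>\<bar> else 0) \<Longrightarrow>
      (\<integral>\<^sup>+\<omega>. ennreal (\<bar>real_cond_exp M F X \<omega> - X \<omega>\<bar> * Y \<omega>) \<partial>M) < ennreal \<epsilon>"
    using cond_exp_error_uniformly_small[OF assms(3-6) \<open>0 < \<epsilon>\<close>] by blast
  obtain \<pi>\<^sub>0 S where "\<pi>\<^sub>0 \<in> fin_partitions M" "blockwise_constant \<pi>\<^sub>0 S"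
    and S_bound: "\<And>\<omega>. \<omega> \<in> space M \<Longrightarrow> \<bar>S \<omega>\<bar> \<le> n + \<delta>"
    and X_S: "AE \<omega> in M. \<bar>X \<omega> - S \<omega>\<bar> \<le> \<delta> + (if n < \<bar>X \<omega>\<bar> then \<bar>X \<omega>\<bar> else 0)"
    using discretization_blockwise_constant[OF assms(1) orlicz_space_measurable[OF assms(4)] \<open>0 < \<delta>\<close> \<open>0 \<le> n\<close>]
    by blast
  show "\<exists>\<pi>\<^sub>0\<in>fin_partitions M. \<forall>\<pi>\<in>fin_partitions M. refines \<pi> \<pi>\<^sub>0 \<longrightarrow>
           (\<integral>\<^sup>+ \<omega>. ennreal (\<bar>cond_exp_part M \<pi> X \<omega> - X \<omega>\<bar> * Y \<omega>) \<partial>M) < ennreal \<epsilon>"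
  proof (intro bexI ballI impI)
    fix \<pi> assume \<pi>: "\<pi> \<in> fin_partitions M" "refines \<pi> \<pi>\<^sub>0"
    have F: "sigma_finite_subalgebra M (sigma (space M) \<pi>)"
      by (rule fin_partitions_sigma_finite_subalgebra[OF assms(1) \<pi>(1)])
    have S_meas: "S \<in> borel_measurable (sigma (space M) \<pi>)"
      using blockwise_constant_refines[OF \<open>blockwise_constant \<pi>\<^sub>0 S\<close> \<pi>(2)] \<pi>(1)
      by (rule blockwise_constant_measurable[rotated])
    have "integrable M S"
      using S_bound measurable_from_subalg[OF sigma_finite_subalgebra.subalg[OF F] S_meas]
      by (intro integrable_const_bound) auto
    with F S_meas X_S show "(\<integral>\<^sup>+ \<omega>. ennreal (\<bar>cond_exp_part M \<pi> X \<omega> - X \<omega>\<bar> * Y \<omega>) \<partial>M) < ennreal \<epsilon>"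
      unfolding cond_exp_part_def by (intro small)
  qed fact
qed

end
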